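(* Let $G$ be a Tutte-Berge graph and $U\subseteq V(G)$. Let $G_1$ and $G_2$ be the induced subgraphs of $G$ on $U$ and on $V(G)\setminus U$, respectively. Assume there is a maximum matching $M$ of $G$ and a partition $M=M_1\cup M_2$ with all edges of $M_1$ in $G_1$ and all edges of $M_2$ in $G_2$. Then $G_1$ and $G_2$ are Tutte-Berge graphs.
   Context: $\nu(G)$ is the matching number of $G$. For $U\subseteq V(G)$, $N_G(U)$ is the set of vertices adjacent to at least one vertex of $U$. $G$ is a Tutte-Berge graph if there exists an independent set $T$ of $G$ with $|T| = |N_G(T)| + |V(G)| - 2\nu(G)$. *)

theory Defs
  imports Main
begin

definition graph :: "'a set \<Rightarrow> 'a set set \<Rightarrow> bool" where
  "graph V E \<longleftrightarrow> finite V \<and> (\<forall>e\<in>E. e \<subseteq> V \<and> card e = 2)"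

definition matching :: "'a set set \<Rightarrow> 'a set set \<Rightarrow> bool" where
  "matching E M \<longleftrightarrow> M \<subseteq> E \<and> (\<forall>e1\<in>M. \<forall>e2\<in>M. e1 \<noteq> e2 \<longrightarrow> e1 \<inter> e2 = {})"

definition matching_number :: "'a set set \<Rightarrow> nat" where
  "matching_number E = Max {card M | M. matching E M}"

definition max_matching :: "'a set set \<Rightarrow> 'a set set \<Rightarrow> bool" where
  "max_matching E M \<longleftrightarrow> matching E M \<and> card M = matching_number E"

definition neighbourhood :: "'a set set \<Rightarrow> 'a set \<Rightarrow> 'a set" where
  "neighbourhood E U = {v. \<exists>u\<in>U. {u, v} \<in> E}"

definition independent :: "'a set set \<Rightarrow> 'a set \<Rightarrow> bool" where
  "independent E T \<longleftrightarrow> (\<forall>u\<in>T. \<forall>v\<in>T. {u, v} \<notin> E)"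

definition tutte_berge_graph :: "'a set \<Rightarrow> 'a set set \<Rightarrow> bool" where
  "tutte_berge_graph V E \<longleftrightarrow>
     (\<exists>T. T \<subseteq> V \<and> independent E T \<and>
          int (card T) = int (card (neighbourhood E T)) + int (card V) - 2 * int (matching_number E))"

definition induced_edges :: "'a set set \<Rightarrow> 'a set \<Rightarrow> 'a set set" where
  "induced_edges E U = {e \<in> E. e \<subseteq> U}"

end

theory Submission
  imports Defs
begin

text \<open>
  For every independent set T and every matching M one has the weak Tutte-Berge inequality
  |T| + 2|M| \<le> |N(T)| + |V|: a matched vertex of T has its partner in N(T), and the unmatched
  vertices of T lie among the |V| - 2|M| unmatched vertices. Split the tight set T of G along U.
  The neighbourhoods of the two halves in G1 and G2 are disjoint subsets of N(T), and
  \<nu>(G) = |M1| + |M2| \<le> \<nu>(G1) + \<nu>(G2). Adding the weak inequalities for G1 and G2 therefore gives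
  at least the tight inequality for G, so both of them must be tight.
\<close>

lemma finite_edges: "graph V E \<Longrightarrow> finite E"
  unfolding graph_def by (meson Pow_iff finite_Pow_iff finite_subset subsetI)

lemma neighbourhood_subset: "graph V E \<Longrightarrow> neighbourhood E T \<subseteq> V"
  unfolding graph_def neighbourhood_def by blast

lemma graph_induced_edges: "graph V E \<Longrightarrow> W \<subseteq> V \<Longrightarrow> graph W (induced_edges E W)"
  unfolding graph_def induced_edges_def using finite_subset by blast

lemma independent_induced_edges: "independent E T \<Longrightarrow> independent (induced_edges E W) (T \<inter> W)"
  unfolding independent_def induced_edges_def by blast

lemma matching_subset: "matching E M \<Longrightarrow> N \<subseteq> M \<Longrightarrow> N \<subseteq> F \<Longrightarrow> matching F N"
  unfolding matching_def by blast

lemma finite_matching_cards: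
  assumes "finite E"
  shows "finite {card M | M. matching E M}"
proof -
  have "{card M | M. matching E M} \<subseteq> card ` Pow E"
    by (auto simp: matching_def)
  then show ?thesis
    using assms finite_subset by blast
qed

lemma card_le_matching_number: "finite E \<Longrightarrow> matching E M \<Longrightarrow> card M \<le> matching_number E"
  unfolding matching_number_def by (auto intro: Max_ge finite_matching_cards)

lemma ex_max_matching:
  assumes "finite E"
  obtains M where "max_matching E M"
proof -
  have "matching E {}"
    by (simp add: matching_def)
  then have "{card M | M. matching E M} \<noteq> {}"
    by blast
  from Max_in[OF finite_matching_cards[OF assms] this] that show thesis
    unfolding max_matching_def matching_number_def by auto
qed

lemma matching_number_le_add:
  assumes max: "max_matching E M" and cover: "M \<subseteq> F\<^sub>1 \<union> F\<^sub>2"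
    and "finite F\<^sub>1" "finite F\<^sub>2"
  shows "matching_number E \<le> matching_number F\<^sub>1 + matching_number F\<^sub>2"
proof -
  have "matching E M" and "card M = matching_number E"
    using max by (auto simp: max_matching_def)
  moreover have "finite M"
    using cover \<open>finite F\<^sub>1\<close> \<open>finite F\<^sub>2\<close> finite_subset by blast
  ultimately have "matching_number E = card (M \<inter> F\<^sub>1) + card (M - F\<^sub>1)"
    using card_Int_Diff[of M F\<^sub>1] by simp
  also have "\<dots> \<le> matching_number F\<^sub>1 + matching_number F\<^sub>2"
  proof (rule add_mono)
    show "card (M \<inter> F\<^sub>1) \<le> matching_number F\<^sub>1"
      by (rule card_le_matching_number[OF \<open>finite F\<^sub>1\<close> matching_subset[OF \<open>matching E M\<close>]]) auto
    show "card (M - F\<^sub>1) \<le> matching_number F\<^sub>2"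
      by (rule card_le_matching_number[OF \<open>finite F\<^sub>2\<close> matching_subset[OF \<open>matching E M\<close>]])
        (use cover in auto)
  qed
  finally show ?thesis .
qed

lemma
  assumes "graph V E" "matching E M"
  shows matching_edges_disjoint: "pairwise disjnt M"
    and matching_edge_card: "e \<in> M \<Longrightarrow> card e = 2"
    and matching_edge_finite: "e \<in> M \<Longrightarrow> finite e"
    and matching_Union_subset: "\<Union>M \<subseteq> V"
  using assms unfolding graph_def matching_def pairwise_def disjnt_def
  by (auto simp: card.infinite subset_iff) (metis card.infinite zero_neq_numeral)

lemma card_Int_Union_matching:
  assumes "graph V E" "matching E M"
  shows "card (A \<inter> \<Union>M) = (\<Sum>e\<in>M. card (e \<inter> A))"
proof -
  have "finite M"
    using assms(2) finite_edges[OF assms(1)] by (meson matching_def rev_finite_subset)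
  have "A \<inter> \<Union>M = (\<Union>e\<in>M. e \<inter> A)"
    by blast
  also have "card \<dots> = (\<Sum>e\<in>M. card (e \<inter> A))"
    using \<open>finite M\<close> matching_edges_disjoint[OF assms] matching_edge_finite[OF assms]
    by (intro card_UN_disjoint) (auto simp: pairwise_def disjnt_def)
  finally show ?thesis .
qed

lemma card_Union_matching:
  assumes "graph V E" "matching E M"
  shows "card (\<Union>M) = 2 * card M"
  using card_Int_Union_matching[OF assms, of UNIV] matching_edge_card[OF assms] by simp

text \<open>An edge meeting an independent set T meets it in one end, and its other end lies in N(T).\<close>

lemma card_edge_Int_independent_le:
  assumes "e \<in> E" "card e = 2" "independent E T"
  shows "card (e \<inter> T) \<le> card (e \<inter> neighbourhood E T)"
proof -
  obtain a b where e: "e = {a, b}" "a \<noteq> b"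
    using \<open>card e = 2\<close> card_2_iff by metis
  have edge_to_T: "x \<in> T \<Longrightarrow> y \<notin> T \<and> y \<in> neighbourhood E T" if "{x, y} = e" for x y
    using assms that unfolding independent_def neighbourhood_def by blast
  consider "a \<in> T" | "b \<in> T" | "e \<inter> T = {}"
    using e by blast
  then show ?thesis
  proof cases
    case 1
    with edge_to_T[of a b] e have "e \<inter> T = {a}" "b \<in> e \<inter> neighbourhood E T"
      by auto
    then show ?thesis
      using e by (simp add: card_gt_0_iff Suc_leI)
  next
    case 2
    with edge_to_T[of b a] e have "e \<inter> T = {b}" "a \<in> e \<inter> neighbourhood E T"
      by auto
    then show ?thesis
      using e by (simp add: card_gt_0_iff Suc_leI)
  qed simp
qed

lemma card_independent_matching_le:
  assumes G: "graph V E" and "T \<subseteq> V" "independent E T" and M: "matching E M"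
  shows "card T + 2 * card M \<le> card (neighbourhood E T) + card V"
proof -
  have "finite V"
    using G by (simp add: graph_def)
  have matched: "card (T \<inter> \<Union>M) \<le> card (neighbourhood E T)"
  proof -
    have "card (T \<inter> \<Union>M) = (\<Sum>e\<in>M. card (e \<inter> T))"
      by (rule card_Int_Union_matching[OF G M])
    also have "\<dots> \<le> (\<Sum>e\<in>M. card (e \<inter> neighbourhood E T))"
      using M matching_edge_card[OF G M] \<open>independent E T\<close>
      by (intro sum_mono card_edge_Int_independent_le) (auto simp: matching_def)
    also have "\<dots> = card (neighbourhood E T \<inter> \<Union>M)"
      by (rule card_Int_Union_matching[OF G M, symmetric])
    also have "\<dots> \<le> card (neighbourhood E T)"
      using neighbourhood_subset[OF G] \<open>finite V\<close> by (intro card_mono) (auto intro: finite_subset)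
    finally show ?thesis .
  qed
  have unmatched: "card (T - \<Union>M) + 2 * card M \<le> card V"
  proof -
    have "card (T - \<Union>M) \<le> card (V - \<Union>M)"
      using \<open>T \<subseteq> V\<close> \<open>finite V\<close> by (intro card_mono) auto
    moreover have "card (V - \<Union>M) + 2 * card M = card V"
      using matching_Union_subset[OF G M] card_Union_matching[OF G M] \<open>finite V\<close>
      by (metis card_Diff_subset card_mono finite_subset le_add_diff_inverse2)
    ultimately show ?thesis
      by linarith
  qed
  have "card T = card (T \<inter> \<Union>M) + card (T - \<Union>M)"
    using \<open>T \<subseteq> V\<close> \<open>finite V\<close> by (simp add: card_Int_Diff finite_subset)
  with matched unmatched show ?thesis
    by linarith
qed

lemma card_independent_le_matching_number:
  assumes "graph V E" "T \<subseteq> V" "independent E T"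
  shows "card T + 2 * matching_number E \<le> card (neighbourhood E T) + card V"
proof -
  obtain M where "max_matching E M"
    using ex_max_matching finite_edges[OF assms(1)] by blast
  then show ?thesis
    using card_independent_matching_le[OF assms, of M] by (simp add: max_matching_def)
qed

lemma tutte_berge_graph_iff:
  assumes "graph V E"
  shows "tutte_berge_graph V E \<longleftrightarrow>
    (\<exists>T\<subseteq>V. independent E T \<and> card (neighbourhood E T) + card V \<le> card T + 2 * matching_number E)"
proof -
  have int_eq_iff: "int a = int b + int c - 2 * int d \<longleftrightarrow> b + c = a + 2 * d" for a b c d :: nat
    by linarith
  have "card (neighbourhood E T) + card V = card T + 2 * matching_number E \<longleftrightarrow>
      card (neighbourhood E T) + card V \<le> card T + 2 * matching_number E"
    if "T \<subseteq> V" "independent E T" for T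
    using card_independent_le_matching_number[OF assms that] by linarith
  then show ?thesis
    unfolding tutte_berge_graph_def int_eq_iff by blast
qed

lemma card_neighbourhood_induced_add_le:
  assumes "finite (neighbourhood E T)" "U \<inter> W = {}" "S\<^sub>1 \<subseteq> T" "S\<^sub>2 \<subseteq> T"
  shows "card (neighbourhood (induced_edges E U) S\<^sub>1) + card (neighbourhood (induced_edges E W) S\<^sub>2)
    \<le> card (neighbourhood E T)"
proof -
  have sub: "neighbourhood (induced_edges E X) S \<subseteq> X \<inter> neighbourhood E T" if "S \<subseteq> T" for X S
    using that unfolding neighbourhood_def induced_edges_def by blast
  have "card (neighbourhood (induced_edges E U) S\<^sub>1) + card (neighbourhood (induced_edges E W) S\<^sub>2)
      = card (neighbourhood (induced_edges E U) S\<^sub>1 \<union> neighbourhood (induced_edges E W) S\<^sub>2)"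
    using sub[of S\<^sub>1 U] sub[of S\<^sub>2 W] assms by (intro card_Un_disjoint[symmetric]) (auto intro: finite_subset)
  also have "\<dots> \<le> card (neighbourhood E T)"
    using sub[of S\<^sub>1 U] sub[of S\<^sub>2 W] assms by (intro card_mono) auto
  finally show ?thesis .
qed

lemma card_Int_induced_le_matching_number:
  assumes "graph V E" "W \<subseteq> V" "independent E T"
  shows "card (T \<inter> W) + 2 * matching_number (induced_edges E W)
    \<le> card (neighbourhood (induced_edges E W) (T \<inter> W)) + card W"
  by (rule card_independent_le_matching_number[OF graph_induced_edges[OF assms(1,2)] Int_lower2
        independent_induced_edges[OF assms(3)]])

lemma tutte_berge_graph_induced_edgesI:
  assumes "graph V E" "W \<subseteq> V" "independent E T"
    and "card (neighbourhood (induced_edges E W) (T \<inter> W)) + card W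
      \<le> card (T \<inter> W) + 2 * matching_number (induced_edges E W)"
  shows "tutte_berge_graph W (induced_edges E W)"
  unfolding tutte_berge_graph_iff[OF graph_induced_edges[OF assms(1,2)]]
  using independent_induced_edges[OF assms(3)] assms(4) by blast

theorem lemma2p8:
  fixes V U :: "'a set" and E M M1 M2 :: "'a set set"
  assumes "graph V E"
    and "tutte_berge_graph V E"
    and "U \<subseteq> V"
    and "max_matching E M"
    and "M = M1 \<union> M2"
    and "M1 \<inter> M2 = {}"
    and "M1 \<subseteq> induced_edges E U"
    and "M2 \<subseteq> induced_edges E (V - U)"
  shows "tutte_berge_graph U (induced_edges E U) \<and>
         tutte_berge_graph (V - U) (induced_edges E (V - U))"
proof -
  have "finite V"
    using assms(1) by (simp add: graph_def)
  obtain T where T: "T \<subseteq> V" "independent E T"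
    and tight: "card (neighbourhood E T) + card V \<le> card T + 2 * matching_number E"
    using assms(1,2) tutte_berge_graph_iff by blast
  note weak = card_Int_induced_le_matching_number[OF assms(1) _ T(2)]
  have "matching_number E \<le> matching_number (induced_edges E U) + matching_number (induced_edges E (V - U))"
    using assms(3,5,7,8)
    by (intro matching_number_le_add[OF assms(4)] finite_edges[OF graph_induced_edges[OF assms(1)]]) auto
  moreover have "card (neighbourhood (induced_edges E U) (T \<inter> U))
      + card (neighbourhood (induced_edges E (V - U)) (T \<inter> (V - U))) \<le> card (neighbourhood E T)"
    using neighbourhood_subset[OF assms(1)] \<open>finite V\<close>
    by (intro card_neighbourhood_induced_add_le) (auto intro: finite_subset)
  moreover have "card T = card (T \<inter> U) + card (T \<inter> (V - U))"
    using card_Int_Diff[OF finite_subset[OF T(1) \<open>finite V\<close>], of U] T(1)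
    by (simp add: Int_Diff[symmetric] Int_absorb2)
  moreover have "card V = card U + card (V - U)"
    using card_Int_Diff[of V U] assms(3) \<open>finite V\<close> by (simp add: Int_absorb1)
  ultimately show ?thesis
    using tight weak[OF assms(3)] weak[OF Diff_subset[of V U]]
    by (intro conjI tutte_berge_graph_induced_edgesI[OF assms(1) _ T(2)] assms(3) Diff_subset) linarith+
qed

end
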